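(* Consider the multiset combinatorial auction model described in the context and an iterative auction that first asks demand queries and then value queries, with truthful bidders, whose allocation after any set of reports is a solution of the winner determination problem (WDP) on the inferred values. Let $a^{DQ}$ be the WDP allocation computed from the reports after the last demand query. Suppose the first value-query round is the bridge bid, i.e., each bidder $i$ is asked a value query for the bundle $a^{DQ}_i$. Then, after the bridge bid and after any subsequent value queries, the efficiency of the WDP allocation is at least the efficiency of $a^{DQ}$, the efficiency achieved by the demand queries alone.
   Context: Multiset combinatorial auction: bidders $N=\{1,\dots,n\}$, items $M=\{1,\dots,m\}$ with capacities $c\in\mathbb{N}^m$. Bundles are $x\in\mathcal{X}=\{0,\dots,c_1\}\times\cdots\times\{0,\dots,c_m\}$. Each bidder $i$ has a value function $v_i:\mathcal{X}\to\mathbb{R}_{\ge0}$. Feasible allocations: $\mathcal{F}=\{a\in\mathcal{X}^n:\sum_i a_{ij}\le c_j\ \forall j\}$. Social welfare $V(a)=\sum_i v_i(a_i)$; efficiency of $a$ is $V(a)/\max_{a'\in\mathcal{F}}V(a')$. A demand query at prices $p\in\mathbb{R}^m_{\ge0}$ is answered truthfully by bidder $i$ with some $x_i^*(p)\in\arg\max_{x\in\mathcal{X}}\{v_i(x)-\langle p,x\rangle\}$; a value query for $x$ is answered with $v_i(x)$. With reports $R_i$ consisting of demand responses $R_i^{DQ}$ (pairs $(x,p)$) and value responses $R_i^{VQ}$ (pairs $(x,v_i(x))$), the inferred value is $\tilde v_i(x;R_i)=v_i(x)$ if $x$ appears in $R_i^{VQ}$ and otherwise $\max(\{\langle x,p\rangle:(x,p)\in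 R_i^{DQ}\}\cup\{0\})$. The WDP allocation is $a^*(R)\in\arg\max_{a\in\mathcal{F}}\sum_i\tilde v_i(a_i;R_i)$. *)

theory Defs
  imports Complex_Main
begin

text \<open>Items are the elements of a finite type 'm, bidders the elements of a finite type 'n.
 A bundle is a function 'm => nat, a price vector a function 'm => real.\<close>

definition bundles :: "('m::finite \<Rightarrow> nat) \<Rightarrow> ('m \<Rightarrow> nat) set" where
  "bundles c = {x. \<forall>j. x j \<le> c j}"

definition pdot :: "('m::finite \<Rightarrow> real) \<Rightarrow> ('m \<Rightarrow> nat) \<Rightarrow> real" where
  "pdot p x = (\<Sum>j\<in>UNIV. p j * real (x j))"

definition feasible :: "('m::finite \<Rightarrow> nat) \<Rightarrow> ('n::finite \<Rightarrow> 'm \<Rightarrow> nat) set" where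
  "feasible c = {a. (\<forall>i. a i \<in> bundles c) \<and> (\<forall>j. (\<Sum>i\<in>UNIV. a i j) \<le> c j)}"

definition welfare :: "('n::finite \<Rightarrow> ('m \<Rightarrow> nat) \<Rightarrow> real) \<Rightarrow> ('n \<Rightarrow> 'm \<Rightarrow> nat) \<Rightarrow> real" where
  "welfare v a = (\<Sum>i\<in>UNIV. v i (a i))"

definition opt_welfare :: "('m::finite \<Rightarrow> nat) \<Rightarrow> ('n::finite \<Rightarrow> ('m \<Rightarrow> nat) \<Rightarrow> real) \<Rightarrow> real" where
  "opt_welfare c v = Max (welfare v ` feasible c)"

definition efficiency :: "('m::finite \<Rightarrow> nat) \<Rightarrow> ('n::finite \<Rightarrow> ('m \<Rightarrow> nat) \<Rightarrow> real)
    \<Rightarrow> ('n \<Rightarrow> 'm \<Rightarrow> nat) \<Rightarrow> real" where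
  "efficiency c v a = welfare v a / opt_welfare c v"

definition truthful_dq :: "('m::finite \<Rightarrow> nat) \<Rightarrow> (('m \<Rightarrow> nat) \<Rightarrow> real) \<Rightarrow> ('m \<Rightarrow> nat) \<Rightarrow> ('m \<Rightarrow> real) \<Rightarrow> bool" where
  "truthful_dq c vi x p \<longleftrightarrow> (\<forall>j. p j \<ge> 0) \<and> x \<in> bundles c \<and>
     (\<forall>y\<in>bundles c. vi y - pdot p y \<le> vi x - pdot p x)"

text \<open>Inferred value from demand reports DQ (pairs (x,p)) and the set VQ of bundles
 for which a (truthful) value query has been answered.\<close>
definition inferred_value ::
  "(('m::finite \<Rightarrow> nat) \<Rightarrow> real) \<Rightarrow> (('m \<Rightarrow> nat) \<times> ('m \<Rightarrow> real)) set \<Rightarrow> ('m \<Rightarrow> nat) set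
    \<Rightarrow> ('m \<Rightarrow> nat) \<Rightarrow> real" where
  "inferred_value vi DQ VQ x =
     (if x \<in> VQ then vi x else Max ({pdot p x | p. (x, p) \<in> DQ} \<union> {0}))"

definition wdp_solution ::
  "('m::finite \<Rightarrow> nat) \<Rightarrow> ('n::finite \<Rightarrow> ('m \<Rightarrow> nat) \<Rightarrow> real)
    \<Rightarrow> ('n \<Rightarrow> (('m \<Rightarrow> nat) \<times> ('m \<Rightarrow> real)) set) \<Rightarrow> ('n \<Rightarrow> ('m \<Rightarrow> nat) set)
    \<Rightarrow> ('n \<Rightarrow> 'm \<Rightarrow> nat) \<Rightarrow> bool" where
  "wdp_solution c v DQ VQ a \<longleftrightarrow> a \<in> feasible c \<and>
     (\<forall>b\<in>feasible c. (\<Sum>i\<in>UNIV. inferred_value (v i) (DQ i) (VQ i) (b i))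
                   \<le> (\<Sum>i\<in>UNIV. inferred_value (v i) (DQ i) (VQ i) (a i)))"

end

theory Submission
  imports Defs "HOL-Library.FuncSet"
begin

text \<open>Inferred values never exceed true values: a truthful demand response x at prices p
 beats the empty bundle, so v x \<ge> \<langle>p, x\<rangle> + v 0 \<ge> \<langle>p, x\<rangle>. After the bridge bid every
 bundle of aDQ has been value-queried, so its inferred welfare is its true welfare.
 Hence welfare(aDQ) is at most the inferred welfare of the WDP allocation a, which in turn
 is at most welfare(a); dividing by the (nonnegative) optimal welfare gives the claim.\<close>

lemma finite_bundles: "finite (bundles (c :: 'm::finite \<Rightarrow> nat))"
proof (rule finite_subset)
  show "bundles c \<subseteq> PiE UNIV (\<lambda>j. {..c j})"
    by (auto simp: bundles_def PiE_def extensional_def)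
qed (rule finite_PiE; simp)

lemma finite_feasible: "finite (feasible c :: ('n::finite \<Rightarrow> 'm::finite \<Rightarrow> nat) set)"
proof (rule finite_subset)
  show "feasible c \<subseteq> PiE (UNIV :: 'n set) (\<lambda>_. bundles c)"
    by (auto simp: feasible_def PiE_def extensional_def)
qed (rule finite_PiE; simp add: finite_bundles)

lemma zero_in_bundles: "(\<lambda>_. 0) \<in> bundles c"
  by (simp add: bundles_def)

lemma zero_in_feasible: "(\<lambda>_ _. 0) \<in> feasible c"
  by (simp add: feasible_def bundles_def)

lemma feasible_in_bundles: "a \<in> feasible c \<Longrightarrow> a i \<in> bundles c"
  by (simp add: feasible_def)

lemma truthful_dq_price_le_value:
  assumes "truthful_dq c vi x p" and "vi (\<lambda>_. 0) \<ge> 0"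
  shows "pdot p x \<le> vi x"
proof -
  have "vi (\<lambda>_. 0) - pdot p (\<lambda>_. 0) \<le> vi x - pdot p x"
    using assms(1) zero_in_bundles unfolding truthful_dq_def by blast
  with assms(2) show ?thesis
    by (simp add: pdot_def)
qed

lemma inferred_value_queried [simp]: "x \<in> VQ \<Longrightarrow> inferred_value vi DQ VQ x = vi x"
  by (simp add: inferred_value_def)

lemma inferred_value_le_value:
  assumes "finite DQ"
    and truthful: "\<And>y p. (y, p) \<in> DQ \<Longrightarrow> truthful_dq c vi y p"
    and "vi (\<lambda>_. 0) \<ge> 0" and "vi x \<ge> 0"
  shows "inferred_value vi DQ VQ x \<le> vi x"
proof -
  have "{pdot p x | p. (x, p) \<in> DQ} \<subseteq> (\<lambda>q. pdot (snd q) x) ` DQ"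
    by force
  then have "finite {pdot p x | p. (x, p) \<in> DQ}"
    using \<open>finite DQ\<close> finite_subset by blast
  moreover have "pdot p x \<le> vi x" if "(x, p) \<in> DQ" for p
    using truthful[OF that] \<open>vi (\<lambda>_. 0) \<ge> 0\<close> by (rule truthful_dq_price_le_value)
  ultimately have "Max ({pdot p x | p. (x, p) \<in> DQ} \<union> {0}) \<le> vi x"
    using \<open>vi x \<ge> 0\<close> by (subst Max_le_iff) auto
  then show ?thesis
    by (simp add: inferred_value_def)
qed

lemma wdp_solution_welfare_ge_queried:
  assumes wdp: "wdp_solution c v DQ VQ a"
    and "b \<in> feasible c" and queried: "\<And>i. b i \<in> VQ i"
    and under: "\<And>i x. x \<in> bundles c \<Longrightarrow> inferred_value (v i) (DQ i) (VQ i) x \<le> v i x"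
  shows "welfare v b \<le> welfare v a"
proof -
  have "welfare v b = (\<Sum>i\<in>UNIV. inferred_value (v i) (DQ i) (VQ i) (b i))"
    by (simp add: welfare_def queried)
  also have "\<dots> \<le> (\<Sum>i\<in>UNIV. inferred_value (v i) (DQ i) (VQ i) (a i))"
    using wdp \<open>b \<in> feasible c\<close> unfolding wdp_solution_def by blast
  also have "\<dots> \<le> welfare v a"
    unfolding welfare_def
    using wdp by (intro sum_mono under) (auto simp: wdp_solution_def feasible_in_bundles)
  finally show ?thesis .
qed

lemma opt_welfare_nonneg:
  assumes "\<And>i x. x \<in> bundles c \<Longrightarrow> v i x \<ge> 0"
  shows "opt_welfare c v \<ge> 0"
proof -
  have "0 \<le> welfare v (\<lambda>_ _. 0)"
    unfolding welfare_def by (intro sum_nonneg assms zero_in_bundles)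
  also have "\<dots> \<le> opt_welfare c v"
    unfolding opt_welfare_def
    by (intro Max_ge finite_imageI finite_feasible imageI zero_in_feasible)
  finally show ?thesis .
qed

lemma efficiency_mono:
  assumes "welfare v b \<le> welfare v a" and "opt_welfare c v \<ge> 0"
  shows "efficiency c v b \<le> efficiency c v a"
  using assms by (simp add: efficiency_def divide_right_mono)

theorem lemmaD9:
  fixes c :: "'m::finite \<Rightarrow> nat"
    and v :: "'n::finite \<Rightarrow> ('m \<Rightarrow> nat) \<Rightarrow> real"
    and DQ :: "'n \<Rightarrow> (('m \<Rightarrow> nat) \<times> ('m \<Rightarrow> real)) set"
    and aDQ :: "'n \<Rightarrow> 'm \<Rightarrow> nat"
    and S :: "'n \<Rightarrow> ('m \<Rightarrow> nat) set"
    and a :: "'n \<Rightarrow> 'm \<Rightarrow> nat"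
  assumes v_nonneg: "\<And>i x. x \<in> bundles c \<Longrightarrow> v i x \<ge> 0"
    and DQ_finite: "\<And>i. finite (DQ i)"
    and DQ_truthful: "\<And>i x p. (x, p) \<in> DQ i \<Longrightarrow> truthful_dq c (v i) x p"
    and aDQ_wdp: "wdp_solution c v DQ (\<lambda>i. {}) aDQ"
    and a_wdp: "wdp_solution c v DQ (\<lambda>i. insert (aDQ i) (S i)) a"
  shows "efficiency c v a \<ge> efficiency c v aDQ"
proof (rule efficiency_mono)
  have "aDQ \<in> feasible c"
    using aDQ_wdp by (simp add: wdp_solution_def)
  moreover have "inferred_value (v i) (DQ i) (insert (aDQ i) (S i)) x \<le> v i x"
    if "x \<in> bundles c" for i x
    using DQ_finite DQ_truthful v_nonneg[OF zero_in_bundles] v_nonneg[OF that]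
    by (rule inferred_value_le_value)
  ultimately show "welfare v aDQ \<le> welfare v a"
    using a_wdp by (intro wdp_solution_welfare_ge_queried) auto
  show "opt_welfare c v \<ge> 0"
    using v_nonneg by (rule opt_welfare_nonneg)
qed

end
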